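(* Let $\epsilon\in[0,1)$ and $\theta=\arcsin\!\big(3-\sqrt{4\epsilon+5}\big)$, $s:=\sin\theta$. Consider the two-qubit state $|\psi_\theta\rangle=\cos(\theta/2)|00\rangle-\sin(\theta/2)|11\rangle$ and the observables $$A_0=B_0=\frac{-(2+s)\sqrt{1-s}}{(2-s)\sqrt{1+s}}\,\sigma_z-\frac{\sqrt2\,s^{3/2}}{(2-s)\sqrt{1+s}}\,\sigma_x,\qquad A_1=B_1=-\sqrt{\frac{1-s}{1+s}}\,\sigma_z+\sqrt{\frac{2s}{1+s}}\,\sigma_x .$$ Define $p(ab|xy)=\langle\psi_\theta|\Pi^{a}_{A_x}\otimes\Pi^{b}_{B_y}|\psi_\theta\rangle$ with $\Pi^{a}_{O}=\tfrac12(\mathbb{1}+(-1)^aO)$. Then $p(01|01)=p(10|10)=p(00|11)=0$ and $$p(00|00)+\epsilon\,p(11|00)=\frac{(4\epsilon+5)\sqrt{4\epsilon+5}-(12\epsilon+11)}{2(1+\epsilon)}>\epsilon,$$ so that $(1-\epsilon)p(00|00)+\epsilon(1-\epsilon)p(11|00)-p(01|01)-p(10|10)-p(00|11)>\epsilon(1-\epsilon)$. In particular $p\notin\mathcal{P}_2^{AB,(\epsilon,\epsilon)}$.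
   Context: $\sigma_x,\sigma_z$ are the Pauli matrices; each observable above is a $\pm1$-valued qubit observable (unit Bloch vector). $\mathcal{P}_2^{AB,(\epsilon,\epsilon)}$ (for inputs and outputs in $\{0,1\}$) is the set of conditional distributions $p(ab|xy)=\int q(d\lambda)p_A(a|xy\lambda)p_B(b|xy\lambda)$, where $(\Lambda,q)$ is a probability space and $p_A(\cdot|x,y,\lambda),p_B(\cdot|x,y,\lambda)$ are distributions on $\{0,1\}$ satisfying $\frac12\sum_a|p_A(a|xy\lambda)-p_A(a|xy'\lambda)|\le\epsilon$ for all $x,y,y',\lambda$ and $\frac12\sum_b|p_B(b|xy\lambda)-p_B(b|x'y\lambda)|\le\epsilon$ for all $y,x,x',\lambda$. *)

theory Defs
  imports "HOL-Probability.Probability"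
begin

text \<open>Qubit operators as 2x2 complex matrices indexed by 0,1 (computational basis).\<close>

definition id2 :: "nat \<Rightarrow> nat \<Rightarrow> complex" where
  "id2 i j = (if i = j then 1 else 0)"

definition sigma_z :: "nat \<Rightarrow> nat \<Rightarrow> complex" where
  "sigma_z i j = (if i = j then (if i = 0 then 1 else -1) else 0)"

definition sigma_x :: "nat \<Rightarrow> nat \<Rightarrow> complex" where
  "sigma_x i j = (if i = j then 0 else 1)"

definition obs :: "real \<Rightarrow> real \<Rightarrow> nat \<Rightarrow> nat \<Rightarrow> complex" where
  "obs cz cx i j = of_real cz * sigma_z i j + of_real cx * sigma_x i j"

definition proj :: "(nat \<Rightarrow> nat \<Rightarrow> complex) \<Rightarrow> nat \<Rightarrow> nat \<Rightarrow> nat \<Rightarrow> complex" where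
  "proj Ob a i j = (id2 i j + (-1) ^ a * Ob i j) / 2"

definition psi :: "real \<Rightarrow> nat \<Rightarrow> nat \<Rightarrow> complex" where
  "psi \<theta> i j = (if i = 0 \<and> j = 0 then of_real (cos (\<theta>/2))
                else if i = 1 \<and> j = 1 then - of_real (sin (\<theta>/2)) else 0)"

definition expval :: "(nat \<Rightarrow> nat \<Rightarrow> complex) \<Rightarrow> (nat \<Rightarrow> nat \<Rightarrow> complex)
    \<Rightarrow> (nat \<Rightarrow> nat \<Rightarrow> complex) \<Rightarrow> complex" where
  "expval \<phi> P Q = (\<Sum>i<2. \<Sum>j<2. \<Sum>k<2. \<Sum>l<2. cnj (\<phi> i j) * P i k * Q j l * \<phi> k l)"

definition obsA0 :: "real \<Rightarrow> nat \<Rightarrow> nat \<Rightarrow> complex" where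
  "obsA0 s = obs (- (2 + s) * sqrt (1 - s) / ((2 - s) * sqrt (1 + s)))
                 (- (sqrt 2 * s powr (3/2)) / ((2 - s) * sqrt (1 + s)))"

definition obsA1 :: "real \<Rightarrow> nat \<Rightarrow> nat \<Rightarrow> complex" where
  "obsA1 s = obs (- sqrt ((1 - s) / (1 + s))) (sqrt (2 * s / (1 + s)))"

definition obsA :: "real \<Rightarrow> nat \<Rightarrow> nat \<Rightarrow> nat \<Rightarrow> complex" where
  "obsA s x = (if x = 0 then obsA0 s else obsA1 s)"

definition qprob :: "real \<Rightarrow> real \<Rightarrow> nat \<Rightarrow> nat \<Rightarrow> nat \<Rightarrow> nat \<Rightarrow> real" where
  "qprob \<theta> s a b x y = Re (expval (psi \<theta>) (proj (obsA s x) a) (proj (obsA s y) b))"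

text \<open>(M, pA, pB) is a local model witnessing p \<in> P_2^{AB,(eps,eps)}:
  pA a x y l = p_A(a|x y l), pB b x y l = p_B(b|x y l); inputs/outputs in {0,1}.\<close>
definition eps_local_model ::
  "real \<Rightarrow> (nat \<Rightarrow> nat \<Rightarrow> nat \<Rightarrow> nat \<Rightarrow> real) \<Rightarrow> 'l measure
    \<Rightarrow> (nat \<Rightarrow> nat \<Rightarrow> nat \<Rightarrow> 'l \<Rightarrow> real) \<Rightarrow> (nat \<Rightarrow> nat \<Rightarrow> nat \<Rightarrow> 'l \<Rightarrow> real) \<Rightarrow> bool" where
  "eps_local_model \<epsilon> p M pA pB \<longleftrightarrow>
     prob_space M \<and>
     (\<forall>a x y. pA a x y \<in> borel_measurable M \<and> pB a x y \<in> borel_measurable M) \<and>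
     (\<forall>x\<le>1. \<forall>y\<le>1. \<forall>l\<in>space M.
        (\<forall>a\<le>1. pA a x y l \<ge> 0 \<and> pB a x y l \<ge> 0) \<and>
        pA 0 x y l + pA 1 x y l = 1 \<and> pB 0 x y l + pB 1 x y l = 1) \<and>
     (\<forall>x\<le>1. \<forall>y\<le>1. \<forall>y'\<le>1. \<forall>l\<in>space M.
        (\<bar>pA 0 x y l - pA 0 x y' l\<bar> + \<bar>pA 1 x y l - pA 1 x y' l\<bar>) / 2 \<le> \<epsilon>) \<and>
     (\<forall>y\<le>1. \<forall>x\<le>1. \<forall>x'\<le>1. \<forall>l\<in>space M.
        (\<bar>pB 0 x y l - pB 0 x' y l\<bar> + \<bar>pB 1 x y l - pB 1 x' y l\<bar>) / 2 \<le> \<epsilon>) \<and>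
     (\<forall>a\<le>1. \<forall>b\<le>1. \<forall>x\<le>1. \<forall>y\<le>1.
        p a b x y = (\<integral>l. pA a x y l * pB b x y l \<partial>M))"

end

theory Submission
  imports Defs
begin

(* Write a_xy, b_xy for the probabilities that Alice, resp. Bob, outputs 0 on inputs (x, y) given
   the hidden variable.  The e-relaxed no-signalling constraints force the chained inequality
     (1-e) a00 b00 + e (1-e) (1-a00) (1-b00) - a01 (1-b01) - (1-a10) b10 - a11 b11 <= e (1-e):
   the first two terms are at most (1-e) max e (min a00 b00), while a01 >= a00 - e, b10 >= b00 - e,
   a11 >= a10 - e, b11 >= b01 - e make the three subtracted products at least
   (1-e) (max e (min a00 b00) - e).  Integrating over the hidden variable bounds every p in
   P_2^{(e,e)}.
   Quantumly, p(ab|xy) = (1 + (-1)^a <A_x> + (-1)^b <B_y> + (-1)^(a+b) <A_x B_y>)/4 is rational in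
   s = sin theta: the three Hardy probabilities vanish and p(00|00) + e p(11|00) = 2 (1-s)^2/(2-s),
   which exceeds e = ((3-s)^2 - 5)/4 by s^3/(4 (2-s)). *)

lemma product_plus_scaled_complement_le_max:
  fixes a b e :: real
  assumes "0 \<le> a" "a \<le> 1" "0 \<le> b" "b \<le> 1" "0 \<le> e"
  shows "a * b + e * ((1 - a) * (1 - b)) \<le> max e a"
proof -
  have "e * (1 - a) \<le> max e a"
    using assms by (simp add: mult_left_le max.coboundedI1)
  then have "b * a + (1 - b) * (e * (1 - a)) \<le> max e a"
    using assms by (intro convex_bound_le) auto
  then show ?thesis
    by (simp add: algebra_simps)
qed

lemma product_plus_scaled_complement_le_max_min:
  fixes a b e :: real
  assumes "0 \<le> a" "a \<le> 1" "0 \<le> b" "b \<le> 1" "0 \<le> e"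
  shows "a * b + e * ((1 - a) * (1 - b)) \<le> max e (min a b)"
  using product_plus_scaled_complement_le_max[of a b e] product_plus_scaled_complement_le_max[of b a e]
    assms by (simp add: max_min_distrib2 mult.commute)

lemma chain_products_lower_bound:
  fixes e m a01 b01 a10 b10 a11 b11 :: real
  assumes "0 \<le> m" "m \<le> 1 - e" "m \<le> a01" "m \<le> b10"
    and "0 \<le> b01" "b01 \<le> 1" "0 \<le> a10" "a10 \<le> 1" "0 \<le> a11" "0 \<le> b11"
    and "a10 - e \<le> a11" "b01 - e \<le> b11"
  shows "(1 - e) * m \<le> a01 * (1 - b01) + (1 - a10) * b10 + a11 * b11"
proof -
  have "m * (1 - b01) \<le> a01 * (1 - b01)"
    using assms by (intro mult_right_mono) auto
  moreover have "(1 - a10) * m \<le> (1 - a10) * b10"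
    using assms by (intro mult_left_mono) auto
  moreover have "m * (a10 + b01 - 1 - e) \<le> a11 * b11"
  proof (cases "a10 + b01 \<le> 1 + e")
    case True
    then have "m * (a10 + b01 - 1 - e) \<le> 0"
      using assms by (intro mult_nonneg_nonpos) auto
    moreover have "0 \<le> a11 * b11"
      using assms by simp
    ultimately show ?thesis
      by linarith
  next
    case False
    \<comment> \<open>(a10-e)(b01-e) - m(a10+b01-1-e) = (1-a10)(1-b01) + (1-e-m)(a10+b01-1-e)\<close>
    then have "(a10 - e) * (b01 - e) \<le> a11 * b11"
      using assms by (intro mult_mono) auto
    moreover have "0 \<le> (1 - a10) * (1 - b01)"
      using assms by simp
    moreover have "0 \<le> (1 - e - m) * (a10 + b01 - 1 - e)"
      using assms False by simp
    ultimately show ?thesis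
      by (simp add: algebra_simps)
  qed
  ultimately show ?thesis
    by (simp add: algebra_simps)
qed

lemma chained_bell_pointwise:
  fixes e a00 b00 a01 b01 a10 b10 a11 b11 :: real
  assumes "0 \<le> e" "e \<le> 1"
    and "0 \<le> a00" "a00 \<le> 1" "0 \<le> b00" "b00 \<le> 1" "0 \<le> a01" "0 \<le> b01" "b01 \<le> 1"
    and "0 \<le> a10" "a10 \<le> 1" "0 \<le> b10" "0 \<le> a11" "0 \<le> b11"
    and "\<bar>a00 - a01\<bar> \<le> e" "\<bar>a10 - a11\<bar> \<le> e" "\<bar>b00 - b10\<bar> \<le> e" "\<bar>b01 - b11\<bar> \<le> e"
  shows "(1 - e) * (a00 * b00) + e * (1 - e) * ((1 - a00) * (1 - b00))
           - a01 * (1 - b01) - (1 - a10) * b10 - a11 * b11 \<le> e * (1 - e)"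
proof -
  define m where "m = max e (min a00 b00) - e"
  have "a00 * b00 + e * ((1 - a00) * (1 - b00)) \<le> e + m"
    using product_plus_scaled_complement_le_max_min[of a00 b00 e] assms by (simp add: m_def)
  then have "(1 - e) * (a00 * b00 + e * ((1 - a00) * (1 - b00))) \<le> (1 - e) * (e + m)"
    using assms(2) by (intro mult_left_mono) auto
  moreover have "(1 - e) * m \<le> a01 * (1 - b01) + (1 - a10) * b10 + a11 * b11"
    by (rule chain_products_lower_bound) (use assms in \<open>auto simp: m_def abs_le_iff\<close>)
  ultimately show ?thesis
    by (simp add: algebra_simps)
qed

lemma eps_local_modelD:
  assumes "eps_local_model e p M pA pB"
  shows "prob_space M"
    and "pA a x y \<in> borel_measurable M" "pB a x y \<in> borel_measurable M"
    and "\<lbrakk>a \<le> 1; x \<le> 1; y \<le> 1; l \<in> space M\<rbrakk> \<Longrightarrow> 0 \<le> pA a x y l \<and> 0 \<le> pB a x y l"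
    and "\<lbrakk>x \<le> 1; y \<le> 1; l \<in> space M\<rbrakk> \<Longrightarrow> pA 0 x y l + pA 1 x y l = 1 \<and> pB 0 x y l + pB 1 x y l = 1"
    and "\<lbrakk>x \<le> 1; y \<le> 1; y' \<le> 1; l \<in> space M\<rbrakk>
           \<Longrightarrow> (\<bar>pA 0 x y l - pA 0 x y' l\<bar> + \<bar>pA 1 x y l - pA 1 x y' l\<bar>) / 2 \<le> e"
    and "\<lbrakk>x \<le> 1; x' \<le> 1; y \<le> 1; l \<in> space M\<rbrakk>
           \<Longrightarrow> (\<bar>pB 0 x y l - pB 0 x' y l\<bar> + \<bar>pB 1 x y l - pB 1 x' y l\<bar>) / 2 \<le> e"
    and "\<lbrakk>a \<le> 1; b \<le> 1; x \<le> 1; y \<le> 1\<rbrakk> \<Longrightarrow> p a b x y = (\<integral>l. pA a x y l * pB b x y l \<partial>M)"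
  using assms unfolding eps_local_model_def by simp_all

lemma eps_local_model_complement:
  assumes "eps_local_model e p M pA pB" "x \<le> 1" "y \<le> 1" "l \<in> space M"
  shows "pA 1 x y l = 1 - pA 0 x y l" "pB 1 x y l = 1 - pB 0 x y l"
  using eps_local_modelD(5)[OF assms] by auto

lemma eps_local_model_prob_bounds:
  assumes "eps_local_model e p M pA pB" "a \<le> 1" "x \<le> 1" "y \<le> 1" "l \<in> space M"
  shows "0 \<le> pA a x y l" "pA a x y l \<le> 1" "0 \<le> pB a x y l" "pB a x y l \<le> 1"
proof -
  have "a = 0 \<or> a = 1"
    using assms(2) by auto
  then show "0 \<le> pA a x y l" "pA a x y l \<le> 1" "0 \<le> pB a x y l" "pB a x y l \<le> 1"
    using eps_local_modelD(4)[OF assms(1) _ assms(3-5), of 0]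
      eps_local_modelD(4)[OF assms(1) _ assms(3-5), of 1] eps_local_model_complement[OF assms(1) assms(3-5)]
    by auto
qed

lemma eps_local_model_signalling_A:
  assumes "eps_local_model e p M pA pB" "x \<le> 1" "y \<le> 1" "y' \<le> 1" "l \<in> space M"
  shows "\<bar>pA 0 x y l - pA 0 x y' l\<bar> \<le> e"
  using eps_local_modelD(6)[OF assms] eps_local_model_complement[OF assms(1) assms(2,3,5)]
    eps_local_model_complement[OF assms(1) assms(2,4,5)]
  by (simp add: abs_minus_commute)

lemma eps_local_model_signalling_B:
  assumes "eps_local_model e p M pA pB" "x \<le> 1" "x' \<le> 1" "y \<le> 1" "l \<in> space M"
  shows "\<bar>pB 0 x y l - pB 0 x' y l\<bar> \<le> e"
  using eps_local_modelD(7)[OF assms] eps_local_model_complement[OF assms(1) assms(2,4,5)]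
    eps_local_model_complement[OF assms(1) assms(3,4,5)]
  by (simp add: abs_minus_commute)

lemma eps_local_model_has_bochner_integral:
  assumes "eps_local_model e p M pA pB" "a \<le> 1" "b \<le> 1" "x \<le> 1" "y \<le> 1"
  shows "has_bochner_integral M (\<lambda>l. pA a x y l * pB b x y l) (p a b x y)"
proof -
  interpret prob_space M
    using eps_local_modelD(1)[OF assms(1)] .
  have "integrable M (\<lambda>l. pA a x y l * pB b x y l)"
  proof (rule integrable_const_bound[where B = 1])
    show "AE l in M. norm (pA a x y l * pB b x y l) \<le> 1"
      using eps_local_model_prob_bounds[OF assms(1) assms(2,4,5)]
        eps_local_model_prob_bounds[OF assms(1) assms(3,4,5)]
      by (intro AE_I2) (simp add: abs_mult mult_le_one)
    show "(\<lambda>l. pA a x y l * pB b x y l) \<in> borel_measurable M"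
      using eps_local_modelD(2,3)[OF assms(1)] by simp
  qed
  then show ?thesis
    using eps_local_modelD(8)[OF assms] by (simp add: has_bochner_integral_integrable)
qed

lemma eps_local_model_chained_bell_pointwise:
  assumes "eps_local_model e p M pA pB" "0 \<le> e" "e \<le> 1" "l \<in> space M"
  shows "(1 - e) * (pA 0 0 0 l * pB 0 0 0 l) + e * (1 - e) * (pA 1 0 0 l * pB 1 0 0 l)
           - pA 0 0 1 l * pB 1 0 1 l - pA 1 1 0 l * pB 0 1 0 l - pA 0 1 1 l * pB 0 1 1 l
         \<le> e * (1 - e)"
proof -
  note bounds = eps_local_model_prob_bounds[OF assms(1) _ _ _ assms(4)]
  note signalling = eps_local_model_signalling_A[OF assms(1) _ _ _ assms(4)]
    eps_local_model_signalling_B[OF assms(1) _ _ _ assms(4)]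
  have complements: "pA 1 0 0 l = 1 - pA 0 0 0 l" "pB 1 0 0 l = 1 - pB 0 0 0 l"
    "pB 1 0 1 l = 1 - pB 0 0 1 l" "pA 1 1 0 l = 1 - pA 0 1 0 l"
    by (rule eps_local_model_complement[OF assms(1) _ _ assms(4)]; simp)+
  show ?thesis
    unfolding complements
    by (rule chained_bell_pointwise) (use assms(2,3) bounds signalling in simp_all)
qed

lemma eps_local_model_chained_bell:
  assumes "eps_local_model e p M pA pB" "0 \<le> e" "e \<le> 1"
  shows "(1 - e) * p 0 0 0 0 + e * (1 - e) * p 1 1 0 0 - p 0 1 0 1 - p 1 0 1 0 - p 0 0 1 1
         \<le> e * (1 - e)"
proof -
  interpret prob_space M
    using eps_local_modelD(1)[OF assms(1)] .
  define F where "F l = (1 - e) * (pA 0 0 0 l * pB 0 0 0 l) + e * (1 - e) * (pA 1 0 0 l * pB 1 0 0 l)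
    - pA 0 0 1 l * pB 1 0 1 l - pA 1 1 0 l * pB 0 1 0 l - pA 0 1 1 l * pB 0 1 1 l" for l
  have "has_bochner_integral M F
      ((1 - e) * p 0 0 0 0 + e * (1 - e) * p 1 1 0 0 - p 0 1 0 1 - p 1 0 1 0 - p 0 0 1 1)"
    unfolding F_def
    by (intro has_bochner_integral_diff has_bochner_integral_add has_bochner_integral_mult_right
        eps_local_model_has_bochner_integral[OF assms(1)]) simp_all
  moreover have "integral\<^sup>L M F \<le> e * (1 - e)"
  proof (rule integral_le_const)
    show "integrable M F"
      using calculation by (rule integrable.intros)
    show "AE l in M. F l \<le> e * (1 - e)"
      using eps_local_model_chained_bell_pointwise[OF assms] by (simp add: F_def)
  qed
  ultimately show ?thesis
    by (simp add: has_bochner_integral_integral_eq)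
qed

lemma Re_expval_psi_proj_obs:
  "Re (expval (psi \<theta>) (proj (obs z1 w1) a) (proj (obs z2 w2) b))
     = (1 + (-1)^a * z1 * cos \<theta> + (-1)^b * z2 * cos \<theta>
         + (-1)^(a+b) * (z1 * z2 - sin \<theta> * w1 * w2)) / 4"
proof -
  define c d where "c = cos (\<theta>/2)" and "d = sin (\<theta>/2)"
  have "psi \<theta> = (\<lambda>i j. if i = 0 \<and> j = 0 then of_real c else if i = 1 \<and> j = 1 then - of_real d else 0)"
    by (simp add: fun_eq_iff psi_def c_def d_def)
  then have "Re (expval (psi \<theta>) (proj (obs z1 w1) a) (proj (obs z2 w2) b))
     = ((c^2 + d^2) + (-1)^a * z1 * (c^2 - d^2) + (-1)^b * z2 * (c^2 - d^2)
         + (-1)^(a+b) * (z1 * z2 * (c^2 + d^2) - 2 * c * d * w1 * w2)) / 4"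
    by (simp add: expval_def numeral_2_eq_2 proj_def obs_def id2_def
        sigma_z_def sigma_x_def power_add algebra_simps power2_eq_square add_divide_distrib)
  moreover have "c^2 + d^2 = 1" "c^2 - d^2 = cos \<theta>" "2 * c * d = sin \<theta>"
    using cos_double[of "\<theta>/2"] sin_double[of "\<theta>/2"] by (simp_all add: c_def d_def)
  ultimately show ?thesis
    by (simp only: mult_1_right)
qed

definition zscale :: "real \<Rightarrow> nat \<Rightarrow> real" where
  "zscale s x = (if x = 0 then (2 + s) / (2 - s) else 1)"

definition xscale :: "real \<Rightarrow> nat \<Rightarrow> real" where
  "xscale s x = (if x = 0 then - s / (2 - s) else 1)"

lemma obsA_eq_obs:
  assumes "0 \<le> s"
  shows "obsA s x = obs (- zscale s x * sqrt ((1 - s) / (1 + s))) (xscale s x * sqrt (2 * s / (1 + s)))"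
proof -
  have "s powr (3/2) = s * sqrt s"
    using assms powr_add[of s 1 "1/2"] by (simp add: powr_half_sqrt)
  then show ?thesis
    by (simp add: obsA_def obsA0_def obsA1_def zscale_def xscale_def real_sqrt_divide
        real_sqrt_mult mult.left_commute del: minus_add_distrib)
qed

(* For sin theta = s this is the correlator <psi_theta| A_x (x) B_y |psi_theta>; the marginals
   are <A_x> = <B_x> = -(1 - s) zscale s x. *)
definition obsA_corr :: "real \<Rightarrow> nat \<Rightarrow> nat \<Rightarrow> real" where
  "obsA_corr s x y = (zscale s x * zscale s y * (1 - s) - 2 * s^2 * xscale s x * xscale s y) / (1 + s)"

lemma qprob_closed_form:
  assumes "0 \<le> s" "s \<le> 1" "sin \<theta> = s" "cos \<theta> = sqrt (1 - s^2)"
  shows "qprob \<theta> s a b x y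
    = (1 - ((-1)^a * zscale s x + (-1)^b * zscale s y) * (1 - s)
        + (-1)^(a+b) * obsA_corr s x y) / 4"
proof -
  define r u where "r = sqrt ((1 - s) / (1 + s))" and "u = sqrt (2 * s / (1 + s))"
  have r2: "r * r = (1 - s) / (1 + s)" and u2: "u * u = 2 * s / (1 + s)"
    using assms(1,2) by (simp_all add: r_def u_def)
  have rc: "r * cos \<theta> = 1 - s"
  proof -
    have "(1 - s) / (1 + s) * (1 - s^2) = (1 - s)^2"
      using assms(1) by (simp add: field_simps power2_eq_square)
    then show ?thesis
      using assms(2,4) by (simp add: r_def real_sqrt_mult[symmetric])
  qed
  have "qprob \<theta> s a b x y
    = (1 - ((-1)^a * zscale s x + (-1)^b * zscale s y) * (r * cos \<theta>)
        + (-1)^(a+b) * (zscale s x * zscale s y * (r * r) - s * xscale s x * xscale s y * (u * u))) / 4"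
    by (simp add: qprob_def obsA_eq_obs[OF assms(1), folded r_def u_def] Re_expval_psi_proj_obs
        assms(3) algebra_simps)
  also have "\<dots> = (1 - ((-1)^a * zscale s x + (-1)^b * zscale s y) * (1 - s)
        + (-1)^(a+b) * obsA_corr s x y) / 4"
    unfolding rc r2 u2 obsA_corr_def using assms(1)
    by (simp add: field_simps add_nonneg_eq_0_iff power2_eq_square)
  finally show ?thesis .
qed

lemma obsA_corr_values:
  assumes "0 \<le> s" "s \<le> 1"
  shows "obsA_corr s 0 0 = (4 - 4 * s + s^2 - 2 * s^3) / (2 - s)^2"
    and "obsA_corr s 0 1 = (2 - 3 * s + 2 * s^2) / (2 - s)"
    and "obsA_corr s 1 0 = (2 - 3 * s + 2 * s^2) / (2 - s)"
    and "obsA_corr s 1 1 = 1 - 2 * s"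
proof -
  have "2 - s \<noteq> 0" "1 + s \<noteq> 0"
    using assms by auto
  then show "obsA_corr s 0 0 = (4 - 4 * s + s^2 - 2 * s^3) / (2 - s)^2"
    and "obsA_corr s 0 1 = (2 - 3 * s + 2 * s^2) / (2 - s)"
    and "obsA_corr s 1 0 = (2 - 3 * s + 2 * s^2) / (2 - s)"
    and "obsA_corr s 1 1 = 1 - 2 * s"
    unfolding obsA_corr_def zscale_def xscale_def
    by (simp_all add: divide_simps) (simp_all add: algebra_simps power2_eq_square power3_eq_cube)
qed

lemma qprob_zero_entries:
  assumes "0 \<le> s" "s \<le> 1" "sin \<theta> = s" "cos \<theta> = sqrt (1 - s^2)"
  shows "qprob \<theta> s 0 1 0 1 = 0" "qprob \<theta> s 1 0 1 0 = 0" "qprob \<theta> s 0 0 1 1 = 0"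
proof -
  have "2 - s \<noteq> 0"
    using assms(2) by auto
  then show "qprob \<theta> s 0 1 0 1 = 0" "qprob \<theta> s 1 0 1 0 = 0" "qprob \<theta> s 0 0 1 1 = 0"
    unfolding qprob_closed_form[OF assms] obsA_corr_values[OF assms(1,2)] zscale_def
    by (simp_all add: divide_simps) (simp_all add: algebra_simps power2_eq_square)
qed

lemma qprob_success_entries:
  assumes "0 \<le> s" "s \<le> 1" "sin \<theta> = s" "cos \<theta> = sqrt (1 - s^2)"
  shows "qprob \<theta> s 0 0 0 0 = s^2 * (1 - s) / (2 - s)^2"
    and "qprob \<theta> s 1 1 0 0 = 4 * (1 - s) / (2 - s)^2"
proof -
  have "2 - s \<noteq> 0"
    using assms(2) by auto
  then show "qprob \<theta> s 0 0 0 0 = s^2 * (1 - s) / (2 - s)^2"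
    and "qprob \<theta> s 1 1 0 0 = 4 * (1 - s) / (2 - s)^2"
    unfolding qprob_closed_form[OF assms] obsA_corr_values[OF assms(1,2)] zscale_def
    by (simp_all add: divide_simps) (simp_all add: algebra_simps power2_eq_square power3_eq_cube)
qed

lemma qprob_weighted_success:
  assumes "0 \<le> s" "s \<le> 1" "sin \<theta> = s" "cos \<theta> = sqrt (1 - s^2)"
  shows "qprob \<theta> s 0 0 0 0 + ((3 - s)^2 - 5) / 4 * qprob \<theta> s 1 1 0 0 = 2 * (1 - s)^2 / (2 - s)"
proof -
  have "2 - s \<noteq> 0"
    using assms(2) by auto
  then show ?thesis
    unfolding qprob_success_entries[OF assms]
    by (simp add: divide_simps) (simp add: algebra_simps power2_eq_square power3_eq_cube)
qed

lemma eps_reparametrisation: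
  assumes "0 \<le> \<epsilon>" "\<epsilon> < 1"
  defines "s \<equiv> 3 - sqrt (4 * \<epsilon> + 5)"
  shows "0 < s" "s < 1" "\<epsilon> = ((3 - s)^2 - 5) / 4"
    and "((4 * \<epsilon> + 5) * sqrt (4 * \<epsilon> + 5) - (12 * \<epsilon> + 11)) / (2 * (1 + \<epsilon>))
           = 2 * (1 - s)^2 / (2 - s)"
proof -
  define t where "t = sqrt (4 * \<epsilon> + 5)"
  have "2 < t"
    using assms(1) unfolding t_def by (intro real_less_rsqrt) simp
  moreover have "t < 3"
    using assms(2) unfolding t_def by (intro real_less_lsqrt) simp_all
  ultimately show "0 < s" "s < 1"
    by (simp_all add: s_def t_def)
  have eps: "\<epsilon> = (t^2 - 5) / 4"
    using assms(1) by (simp add: t_def)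
  then show "\<epsilon> = ((3 - s)^2 - 5) / 4"
    by (simp add: s_def t_def[symmetric])
  have "2^2 < t^2"
    using \<open>2 < t\<close> by (intro power_strict_mono) auto
  then have "t - 1 \<noteq> 0" "t^2 - 1 \<noteq> 0" "\<bar>t\<bar> \<noteq> 1"
    using \<open>2 < t\<close> by auto
  then show "((4 * \<epsilon> + 5) * sqrt (4 * \<epsilon> + 5) - (12 * \<epsilon> + 11)) / (2 * (1 + \<epsilon>))
      = 2 * (1 - s)^2 / (2 - s)"
    unfolding s_def t_def[symmetric] eps
    by (simp add: divide_simps) (simp add: algebra_simps power2_eq_square power3_eq_cube)
qed

lemma eps_param_less_success:
  fixes s :: real
  assumes "0 < s" "s < 2"
  shows "((3 - s)^2 - 5) / 4 < 2 * (1 - s)^2 / (2 - s)"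
proof -
  have "2 * (1 - s)^2 / (2 - s) - ((3 - s)^2 - 5) / 4 = s^3 / (4 * (2 - s))"
    using assms by (simp add: divide_simps) (simp add: algebra_simps power2_eq_square power3_eq_cube)
  moreover have "0 < s^3 / (4 * (2 - s))"
    using assms by simp
  ultimately show ?thesis
    by linarith
qed

theorem mainTheorem7:
  fixes \<epsilon> :: real
    and M :: "'l measure"
    and pA pB :: "nat \<Rightarrow> nat \<Rightarrow> nat \<Rightarrow> 'l \<Rightarrow> real"
  assumes "0 \<le> \<epsilon>" and "\<epsilon> < 1"
  defines "\<theta> \<equiv> arcsin (3 - sqrt (4 * \<epsilon> + 5))"
  defines "s \<equiv> sin \<theta>"
  defines "p \<equiv> qprob \<theta> s"
  shows "p 0 1 0 1 = 0 \<and> p 1 0 1 0 = 0 \<and> p 0 0 1 1 = 0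
    \<and> p 0 0 0 0 + \<epsilon> * p 1 1 0 0
        = ((4 * \<epsilon> + 5) * sqrt (4 * \<epsilon> + 5) - (12 * \<epsilon> + 11)) / (2 * (1 + \<epsilon>))
    \<and> ((4 * \<epsilon> + 5) * sqrt (4 * \<epsilon> + 5) - (12 * \<epsilon> + 11)) / (2 * (1 + \<epsilon>)) > \<epsilon>
    \<and> (1 - \<epsilon>) * p 0 0 0 0 + \<epsilon> * (1 - \<epsilon>) * p 1 1 0 0 - p 0 1 0 1 - p 1 0 1 0 - p 0 0 1 1
        > \<epsilon> * (1 - \<epsilon>)
    \<and> \<not> eps_local_model \<epsilon> p M pA pB"
proof -
  let ?R = "((4 * \<epsilon> + 5) * sqrt (4 * \<epsilon> + 5) - (12 * \<epsilon> + 11)) / (2 * (1 + \<epsilon>))"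
  have s_eq: "s = 3 - sqrt (4 * \<epsilon> + 5)"
    using eps_reparametrisation(1,2)[OF assms(1,2)] by (simp add: s_def \<theta>_def)
  note param = eps_reparametrisation[OF assms(1,2), folded s_eq]
  have s_bounds: "0 \<le> s" "s \<le> 1"
    using param(1,2) by auto
  have "\<theta> = arcsin s"
    by (simp add: \<theta>_def s_eq)
  then have trig: "sin \<theta> = s" "cos \<theta> = sqrt (1 - s^2)"
    using s_bounds by (simp_all add: cos_arcsin)
  note zeros = qprob_zero_entries[OF s_bounds trig, folded p_def]
  have success: "p 0 0 0 0 + \<epsilon> * p 1 1 0 0 = ?R"
    unfolding param(4) using qprob_weighted_success[OF s_bounds trig, folded p_def param(3)] .
  have gap: "?R > \<epsilon>"
    using eps_param_less_success[of s] param by simp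
  have "(1 - \<epsilon>) * p 0 0 0 0 + \<epsilon> * (1 - \<epsilon>) * p 1 1 0 0 - p 0 1 0 1 - p 1 0 1 0 - p 0 0 1 1
      = (1 - \<epsilon>) * (p 0 0 0 0 + \<epsilon> * p 1 1 0 0)"
    using zeros by (simp add: algebra_simps)
  also have "\<dots> > (1 - \<epsilon>) * \<epsilon>"
    unfolding success using gap assms(2) by (intro mult_strict_left_mono) auto
  finally have violation: "(1 - \<epsilon>) * p 0 0 0 0 + \<epsilon> * (1 - \<epsilon>) * p 1 1 0 0
      - p 0 1 0 1 - p 1 0 1 0 - p 0 0 1 1 > \<epsilon> * (1 - \<epsilon>)"
    by (simp add: mult.commute)
  then have "\<not> eps_local_model \<epsilon> p M pA pB"
    using eps_local_model_chained_bell[of \<epsilon> p M pA pB] assms(1,2) by linarith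
  then show ?thesis
    using zeros success gap violation by simp
qed

end
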